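(* Let $\mathcal H$ be a complex Hilbert space of finite dimension $n$ and let $U,V,W$ be unitary operators on $\mathcal H$. Then: (1) (Projective invariance) for every $c\in\mathbb C$ with $|c|=1$, $D(U,cV)=D(cU,V)=D(U,V)$; (2) $0\le D(U,V)\le 1$, and $D(U,V)=0$ if and only if $U=cV$ for some $c\in\mathbb C$ with $|c|=1$; (3) $D(U,V)=D(V,U)$; (4) (Triangle inequality) $D(U,W)\le D(U,V)+D(V,W)$; (5) (Invariance) for every unitary $X$ on $\mathcal H$, $D(XU,XV)=D(UX,VX)=D(U,V)$; (6) $D(U,V)=1$ if and only if there is a unit vector $\alpha\in\mathcal H$ such that $U\alpha$ and $V\alpha$ are orthogonal.
   Context: For unitary operators $U,V$ on a finite-dimensional complex Hilbert space $\mathcal H$ define the u-distance $D(U,V)=\max_{\|\psi\|=1}\big(1-|\langle\psi,U^\dagger V\psi\rangle|^2\big)^{1/2}=\big(1-\min_{\|\psi\|=1}|\langle\psi,U^\dagger V\psi\rangle|^2\big)^{1/2}$. *)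

theory Defs
  imports "HOL-Analysis.Analysis"
begin

text \<open>The Hilbert space is complex^'n for an arbitrary finite index type 'n
  (dimension CARD('n)); operators are 'n x 'n complex matrices acting by *v.\<close>

definition cinner :: "complex ^ 'n \<Rightarrow> complex ^ 'n \<Rightarrow> complex" where
  "cinner x y = (\<Sum>i\<in>UNIV. cnj (x $ i) * y $ i)"

definition cadj :: "complex ^ 'n ^ 'n \<Rightarrow> complex ^ 'n ^ 'n" where
  "cadj A = (\<chi> i j. cnj (A $ j $ i))"

definition cscale :: "complex \<Rightarrow> complex ^ 'n ^ 'n \<Rightarrow> complex ^ 'n ^ 'n" where
  "cscale c A = (\<chi> i j. c * A $ i $ j)"

definition unitary :: "complex ^ 'n ^ 'n \<Rightarrow> bool" where
  "unitary U \<longleftrightarrow> cadj U ** U = mat 1 \<and> U ** cadj U = mat 1"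

definition udist :: "complex ^ 'n ^ 'n \<Rightarrow> complex ^ 'n ^ 'n \<Rightarrow> real" where
  "udist U V = sqrt (1 - (INF \<psi>\<in>{\<psi>. norm \<psi> = 1}. (cmod (cinner \<psi> ((cadj U ** V) *v \<psi>)))\<^sup>2))"

end

theory Submission
  imports Defs
begin

text \<open>For unit vectors p and x, Pythagoras gives
  ||x - b p||^2 = 1 - |<p,x>|^2 + |<p,x> - b|^2,
  so sqrt (1 - |<p,x>|^2) is the distance from x to the complex line through p and
  satisfies the triangle inequality. Since <\<psi>, U* V \<psi>> = <U \<psi>, V \<psi>>, D(U,V) is the
  supremum over unit \<psi> of this distance between U \<psi> and V \<psi>; projective invariance,
  symmetry, the triangle inequality and unitary invariance therefore hold pointwise in \<psi>
  (right invariance after the substitution \<psi> := X \<psi>). If D(U,V) = 0 then every V \<psi> lies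
  on the line through U \<psi>, so every vector is an eigenvector of U* V, which is hence
  a scalar. If D(U,V) = 1 the infimum 0 is attained by compactness of the unit sphere.\<close>

lemma norm_vec_complex_sq: "(norm (x::complex^'n))\<^sup>2 = (\<Sum>i\<in>UNIV. (cmod (x$i))\<^sup>2)"
  unfolding norm_vec_def L2_set_def by (simp add: sum_nonneg)

lemma cinner_self_eq_norm_sq: "cinner x x = complex_of_real ((norm x)\<^sup>2)"
  unfolding norm_vec_complex_sq cinner_def of_real_sum
  by (rule sum.cong) (auto simp: complex_norm_square[symmetric] mult.commute)

lemma cinner_commute: "cinner y x = cnj (cinner x y)"
  unfolding cinner_def by (simp add: mult.commute)

lemma cinner_diff_left: "cinner (x - y) z = cinner x z - cinner y z"
  unfolding cinner_def by (simp add: algebra_simps sum_subtractf)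

lemma cinner_diff_right: "cinner x (y - z) = cinner x y - cinner x z"
  unfolding cinner_def by (simp add: algebra_simps sum_subtractf)

lemma cinner_smult_left: "cinner (c *s x) y = cnj c * cinner x y"
  unfolding cinner_def by (simp add: algebra_simps sum_distrib_left)

lemma cinner_smult_right: "cinner x (c *s y) = c * cinner x y"
  unfolding cinner_def by (simp add: algebra_simps sum_distrib_left)

lemma cinner_adjoint: "cinner (A *v x) y = cinner x (cadj A *v y)"
proof -
  have "cinner (A *v x) y = (\<Sum>i\<in>UNIV. \<Sum>j\<in>UNIV. cnj (A$i$j) * cnj (x$j) * y$i)"
    unfolding cinner_def matrix_vector_mult_def by (simp add: sum_distrib_right)
  also have "\<dots> = (\<Sum>j\<in>UNIV. \<Sum>i\<in>UNIV. cnj (A$i$j) * cnj (x$j) * y$i)"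
    by (rule sum.swap)
  also have "\<dots> = cinner x (cadj A *v y)"
    unfolding cinner_def matrix_vector_mult_def cadj_def
    by (simp add: sum_distrib_left mult.assoc mult.left_commute)
  finally show ?thesis .
qed

lemma norm_smult_complex: "norm (c *s (x::complex^'n)) = cmod c * norm x"
proof -
  have "(norm (c *s x))\<^sup>2 = (cmod c * norm x)\<^sup>2"
    unfolding power_mult_distrib norm_vec_complex_sq
    by (simp add: norm_mult power_mult_distrib sum_distrib_left)
  then show ?thesis by (simp add: power2_eq_iff_nonneg)
qed

lemma matrix_vector_mult_smult: "M *v (c *s x) = c *s (M *v (x::complex^'n))"
  unfolding matrix_vector_mult_def by (simp add: vec_eq_iff sum_distrib_left algebra_simps)

lemma cscale_matrix_vector_mult: "cscale c A *v x = c *s (A *v x)"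
  unfolding cscale_def matrix_vector_mult_def by (simp add: vec_eq_iff sum_distrib_left mult.assoc)

lemma matrix_vector_mult_axis: "(M *v axis j (1::complex)) $ i = M$i$j"
  unfolding matrix_vector_mult_def axis_def
  by (simp add: if_distrib[of "\<lambda>x. M$i$_ * x"] cong: if_cong)

lemma scalar_if_all_eigenvectors:
  fixes M :: "complex^'n^'n"
  assumes eigen: "\<And>\<psi>. \<exists>c. M *v \<psi> = c *s \<psi>"
  shows "\<exists>a. \<forall>\<psi>. M *v \<psi> = a *s \<psi>"
proof -
  have off_diag: "M$i$j = 0" if "i \<noteq> j" for i j
  proof -
    obtain c where c: "M *v axis j 1 = c *s axis j 1" using eigen by blast
    have "M$i$j = (M *v axis j 1) $ i" by (rule matrix_vector_mult_axis[symmetric])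
    also have "\<dots> = 0" using that by (simp only: c) (simp add: axis_def)
    finally show ?thesis .
  qed
  have diag: "M$i$i = M$j$j" for i j
  proof (cases "i = j")
    case False
    obtain c where c: "M *v (axis i 1 + axis j 1) = c *s (axis i 1 + axis j 1)"
      using eigen by blast
    have "(M *v (axis i 1 + axis j 1)) $ i = M$i$i" "(M *v (axis i 1 + axis j 1)) $ j = M$j$j"
      using off_diag False by (simp_all add: matrix_vector_right_distrib matrix_vector_mult_axis)
    moreover have "(c *s (axis i 1 + axis j 1)) $ i = c" "(c *s (axis i 1 + axis j 1)) $ j = c"
      using False by (simp_all add: axis_def)
    ultimately show ?thesis using c by metis
  qed simp
  obtain k :: 'n where True by simp
  have "(M *v \<psi>) $ i = M$k$k * \<psi>$i" for \<psi> i
  proof -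
    have "(M *v \<psi>) $ i = (\<Sum>j\<in>UNIV. M$i$j * \<psi>$j)"
      by (simp add: matrix_vector_mult_def)
    also have "\<dots> = (\<Sum>j\<in>UNIV. if j = i then M$k$k * \<psi>$j else 0)"
      by (rule sum.cong) (use off_diag diag[of i k] in auto)
    finally show ?thesis by simp
  qed
  then have "M *v \<psi> = M$k$k *s \<psi>" for \<psi> by (simp add: vec_eq_iff)
  then show ?thesis by blast
qed

lemma norm_diff_smult_unit_sq:
  assumes "norm p = 1"
  shows "(norm (x - b *s p))\<^sup>2 = (norm x)\<^sup>2 - (cmod (cinner p x))\<^sup>2 + (cmod (cinner p x - b))\<^sup>2"
proof -
  define c where "c = cinner p x"
  have "cinner x p = cnj c" unfolding c_def by (rule cinner_commute)
  moreover have "cinner p p = 1" using assms by (simp add: cinner_self_eq_norm_sq)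
  ultimately have "cinner (x - b *s p) (x - b *s p) = cinner x x - b * cnj c - cnj b * c + cnj b * b"
    by (simp add: cinner_diff_left cinner_diff_right cinner_smult_left cinner_smult_right
        c_def[symmetric] algebra_simps)
  then have "(norm (x - b *s p))\<^sup>2 = Re (cinner x x - b * cnj c - cnj b * c + cnj b * b)"
    by (metis Re_complex_of_real cinner_self_eq_norm_sq)
  also have "\<dots> = (norm x)\<^sup>2 - (cmod c)\<^sup>2 + (cmod (c - b))\<^sup>2"
    unfolding cmod_power2 by (simp add: cinner_self_eq_norm_sq power2_eq_square algebra_simps)
  finally show ?thesis by (simp add: c_def)
qed

lemma cmod_cinner_unit_le:
  assumes "norm p = 1"
  shows "cmod (cinner p x) \<le> norm x"
proof -
  have "(cmod (cinner p x))\<^sup>2 \<le> (norm x)\<^sup>2"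
    using norm_diff_smult_unit_sq[OF assms, of x "cinner p x"]
      zero_le_power2[of "norm (x - cinner p x *s p)"] by simp
  then show ?thesis by (simp add: power2_le_iff_abs_le)
qed

lemma eq_cinner_smult_if_cmod_cinner_eq_norm:
  assumes "norm p = 1" and "cmod (cinner p x) = norm x"
  shows "x = cinner p x *s p"
  using norm_diff_smult_unit_sq[OF assms(1), of x "cinner p x"] assms(2) by simp

definition line_dist :: "complex^'n \<Rightarrow> complex^'n \<Rightarrow> real" where
  "line_dist p x = sqrt (1 - (cmod (cinner p x))\<^sup>2)"

lemma line_dist_eq_norm_diff:
  assumes "norm p = 1" and "norm x = 1"
  shows "norm (x - cinner p x *s p) = line_dist p x"
proof -
  have "(norm (x - cinner p x *s p))\<^sup>2 = 1 - (cmod (cinner p x))\<^sup>2"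
    using norm_diff_smult_unit_sq[OF assms(1), of x "cinner p x"] assms(2) by simp
  then show ?thesis unfolding line_dist_def by (metis norm_ge_zero real_sqrt_unique)
qed

lemma line_dist_le_norm_diff:
  assumes "norm p = 1" and "norm x = 1"
  shows "line_dist p x \<le> norm (x - b *s p)"
proof -
  have "(norm (x - cinner p x *s p))\<^sup>2 \<le> (norm (x - b *s p))\<^sup>2"
    using norm_diff_smult_unit_sq[OF assms(1), of x "cinner p x"]
      norm_diff_smult_unit_sq[OF assms(1), of x b] by simp
  then show ?thesis
    using line_dist_eq_norm_diff[OF assms] by (simp add: power2_le_iff_abs_le)
qed

lemma line_dist_triangle:
  assumes p: "norm p = 1" and q: "norm q = 1" and x: "norm x = 1"
  shows "line_dist p x \<le> line_dist p q + line_dist q x"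
proof -
  define a where "a = cinner q x"
  define b where "b = cinner p q"
  \<comment> \<open>x is within line_dist q x of a q, and a q is within |a| line_dist p q of (a b) p.\<close>
  have "x - (a * b) *s p = (x - a *s q) + a *s (q - b *s p)"
    by (simp add: vec_eq_iff algebra_simps)
  then have "norm (x - (a * b) *s p) \<le> norm (x - a *s q) + cmod a * norm (q - b *s p)"
    by (metis norm_triangle_ineq norm_smult_complex)
  also have "\<dots> \<le> line_dist q x + 1 * line_dist p q"
    using line_dist_eq_norm_diff[OF p q] line_dist_eq_norm_diff[OF q x]
      norm_ge_zero[of "q - b *s p"] cmod_cinner_unit_le[OF q, of x] x
    unfolding a_def b_def by (intro add_mono mult_mono) auto
  finally show ?thesis
    using line_dist_le_norm_diff[OF p x, of "a * b"] by simp
qed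

lemma cadj_cadj: "cadj (cadj A) = A"
  unfolding cadj_def by (simp add: vec_eq_iff)

lemma unitary_cadj: "unitary U \<Longrightarrow> unitary (cadj U)"
  unfolding unitary_def by (simp add: cadj_cadj)

lemma unitary_cinner: "unitary U \<Longrightarrow> cinner (U *v x) (U *v y) = cinner x y"
  unfolding unitary_def by (simp add: cinner_adjoint matrix_vector_mul_assoc)

lemma unitary_norm: "unitary U \<Longrightarrow> norm (U *v x) = norm x"
  using unitary_cinner[of U x x]
  by (simp add: cinner_self_eq_norm_sq power2_eq_iff_nonneg del: of_real_power)

lemma unitary_image_unit_sphere:
  fixes X :: "complex^'n^'n"
  assumes "unitary X"
  shows "(*v) X ` {\<psi>. norm \<psi> = 1} = {\<psi>. norm \<psi> = 1}"
proof
  show "(*v) X ` {\<psi>. norm \<psi> = 1} \<subseteq> {\<psi>. norm \<psi> = 1}"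
    using unitary_norm[OF assms] by auto
  show "{\<psi>. norm \<psi> = 1} \<subseteq> (*v) X ` {\<psi>. norm \<psi> = 1}"
  proof
    fix \<psi> :: "complex^'n" assume "\<psi> \<in> {\<psi>. norm \<psi> = 1}"
    then have "cadj X *v \<psi> \<in> {\<psi>. norm \<psi> = 1}"
      using unitary_norm[OF unitary_cadj[OF assms]] by simp
    moreover have "\<psi> = X *v (cadj X *v \<psi>)"
      using assms by (simp add: unitary_def matrix_vector_mul_assoc)
    ultimately show "\<psi> \<in> (*v) X ` {\<psi>. norm \<psi> = 1}" by (rule rev_image_eqI)
  qed
qed

lemma unit_sphere_nonempty: "{\<psi>::complex^'n. norm \<psi> = 1} \<noteq> {}"
  using sphere_eq_empty[of "0::complex^'n" 1] by (auto simp: sphere_def)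

definition overlap :: "complex^'n^'n \<Rightarrow> complex^'n^'n \<Rightarrow> complex^'n \<Rightarrow> real" where
  "overlap U V \<psi> = (cmod (cinner (U *v \<psi>) (V *v \<psi>)))\<^sup>2"

definition min_overlap :: "complex^'n^'n \<Rightarrow> complex^'n^'n \<Rightarrow> real" where
  "min_overlap U V = (INF \<psi>\<in>{\<psi>. norm \<psi> = 1}. overlap U V \<psi>)"

lemma udist_eq_min_overlap: "udist U V = sqrt (1 - min_overlap U V)"
  unfolding udist_def min_overlap_def overlap_def
  by (simp add: matrix_vector_mul_assoc[symmetric] cinner_adjoint)

lemma overlap_nonneg: "0 \<le> overlap U V \<psi>"
  unfolding overlap_def by simp

lemma overlap_le_1:
  assumes "unitary U" and "unitary V" and "norm \<psi> = 1"
  shows "overlap U V \<psi> \<le> 1"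
proof -
  have "cmod (cinner (U *v \<psi>) (V *v \<psi>)) \<le> 1"
    using cmod_cinner_unit_le[of "U *v \<psi>" "V *v \<psi>"] assms unitary_norm by metis
  then show ?thesis unfolding overlap_def by (simp add: power_le_one)
qed

lemma overlap_continuous_on: "continuous_on A (overlap U V)"
  unfolding overlap_def[abs_def] cinner_def by (intro continuous_intros)

lemma min_overlap_le:
  assumes "norm \<psi> = 1"
  shows "min_overlap U V \<le> overlap U V \<psi>"
proof -
  have "bdd_below (overlap U V ` {\<psi>. norm \<psi> = 1})"
    by (rule bdd_belowI[where m = 0]) (auto simp: overlap_nonneg)
  then show ?thesis
    unfolding min_overlap_def by (rule cINF_lower) (simp add: assms)
qed

lemma min_overlap_greatest:
  "(\<And>\<psi>. norm \<psi> = 1 \<Longrightarrow> a \<le> overlap U V \<psi>) \<Longrightarrow> a \<le> min_overlap U V"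
  unfolding min_overlap_def by (rule cINF_greatest[OF unit_sphere_nonempty]) simp

lemma min_overlap_nonneg: "0 \<le> min_overlap U V"
  by (rule min_overlap_greatest) (simp add: overlap_nonneg)

lemma min_overlap_le_1:
  fixes U V :: "complex^'n^'n"
  assumes "unitary U" and "unitary V"
  shows "min_overlap U V \<le> 1"
proof -
  obtain \<psi> :: "complex^'n" where "norm \<psi> = 1" using unit_sphere_nonempty by blast
  then show ?thesis using min_overlap_le[of \<psi> U V] overlap_le_1[OF assms] by fastforce
qed

lemma min_overlap_attained:
  fixes U V :: "complex^'n^'n"
  shows "\<exists>\<psi>. norm \<psi> = 1 \<and> overlap U V \<psi> = min_overlap U V"
proof -
  have "\<exists>\<psi>\<in>sphere 0 1. \<forall>\<phi>\<in>sphere 0 1. overlap U V \<psi> \<le> overlap U V \<phi>"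
    by (rule continuous_attains_inf) (simp_all add: overlap_continuous_on)
  then obtain \<psi> :: "complex^'n" where \<psi>: "\<psi> \<in> sphere 0 1"
    and "\<And>\<phi>. \<phi> \<in> sphere 0 1 \<Longrightarrow> overlap U V \<psi> \<le> overlap U V \<phi>"
    by auto
  then have "overlap U V \<psi> \<le> min_overlap U V"
    by (intro min_overlap_greatest) auto
  with \<psi> show ?thesis using min_overlap_le[of \<psi> U V] by auto
qed

lemma udist_cong:
  assumes "\<And>\<psi>. norm \<psi> = 1 \<Longrightarrow> overlap U V \<psi> = overlap U' V' \<psi>"
  shows "udist U V = udist U' V'"
  unfolding udist_eq_min_overlap min_overlap_def
  using assms by (auto intro!: arg_cong[where f = Inf] image_cong)

lemma udist_nonneg: "unitary U \<Longrightarrow> unitary V \<Longrightarrow> 0 \<le> udist U V"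
  unfolding udist_eq_min_overlap using min_overlap_le_1 by simp

lemma udist_le_1: "udist U V \<le> 1"
  unfolding udist_eq_min_overlap using min_overlap_nonneg[of U V] by simp

lemma line_dist_le_udist:
  assumes "norm \<psi> = 1"
  shows "line_dist (U *v \<psi>) (V *v \<psi>) \<le> udist U V"
  unfolding udist_eq_min_overlap line_dist_def
  using min_overlap_le[OF assms, of U V] by (simp add: overlap_def)

lemma udist_le:
  fixes U V :: "complex^'n^'n"
  assumes "unitary U" and "unitary V" and "0 \<le> s"
    and "\<And>\<psi>. norm \<psi> = 1 \<Longrightarrow> line_dist (U *v \<psi>) (V *v \<psi>) \<le> s"
  shows "udist U V \<le> s"
proof -
  have "1 - s\<^sup>2 \<le> min_overlap U V"
  proof (rule min_overlap_greatest)
    fix \<psi> :: "complex^'n" assume \<psi>: "norm \<psi> = 1"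
    have "0 \<le> 1 - overlap U V \<psi>" using overlap_le_1[OF assms(1,2) \<psi>] by simp
    moreover have "sqrt (1 - overlap U V \<psi>) \<le> s"
      using assms(4)[OF \<psi>] by (simp add: line_dist_def overlap_def)
    ultimately show "1 - s\<^sup>2 \<le> overlap U V \<psi>"
      using real_sqrt_le_iff[of "1 - overlap U V \<psi>" "s\<^sup>2"] assms(3) by simp
  qed
  then show ?thesis
    using assms(3) real_sqrt_le_mono[of "1 - min_overlap U V" "s\<^sup>2"]
    unfolding udist_eq_min_overlap by simp
qed

lemma udist_triangle:
  fixes U V W :: "complex^'n^'n"
  assumes "unitary U" and "unitary V" and "unitary W"
  shows "udist U W \<le> udist U V + udist V W"
proof (rule udist_le)
  fix \<psi> :: "complex^'n" assume "norm \<psi> = 1"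
  then have "line_dist (U *v \<psi>) (W *v \<psi>)
      \<le> line_dist (U *v \<psi>) (V *v \<psi>) + line_dist (V *v \<psi>) (W *v \<psi>)"
    using assms by (intro line_dist_triangle) (simp_all add: unitary_norm)
  also have "\<dots> \<le> udist U V + udist V W"
    using \<open>norm \<psi> = 1\<close> by (intro add_mono line_dist_le_udist)
  finally show "line_dist (U *v \<psi>) (W *v \<psi>) \<le> udist U V + udist V W" .
qed (use assms udist_nonneg[of U V] udist_nonneg[of V W] in simp_all)

lemma udist_cscale_right: "cmod c = 1 \<Longrightarrow> udist U (cscale c V) = udist U V"
  by (rule udist_cong) (simp add: overlap_def cscale_matrix_vector_mult cinner_smult_right norm_mult)

lemma udist_cscale_left: "cmod c = 1 \<Longrightarrow> udist (cscale c U) V = udist U V"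
  by (rule udist_cong) (simp add: overlap_def cscale_matrix_vector_mult cinner_smult_left norm_mult)

lemma udist_commute: "udist U V = udist V U"
  by (rule udist_cong) (metis overlap_def cinner_commute complex_mod_cnj)

lemma udist_mult_left: "unitary X \<Longrightarrow> udist (X ** U) (X ** V) = udist U V"
  by (rule udist_cong) (simp add: overlap_def matrix_vector_mul_assoc[symmetric] unitary_cinner)

lemma udist_mult_right:
  assumes "unitary X"
  shows "udist (U ** X) (V ** X) = udist U V"
proof -
  have "overlap (U ** X) (V ** X) = overlap U V \<circ> (*v) X"
    by (simp add: fun_eq_iff overlap_def matrix_vector_mul_assoc[symmetric])
  then have "min_overlap (U ** X) (V ** X) = Inf (overlap U V ` (*v) X ` {\<psi>. norm \<psi> = 1})"
    unfolding min_overlap_def image_comp by simp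
  then show ?thesis
    unfolding udist_eq_min_overlap min_overlap_def unitary_image_unit_sphere[OF assms] by simp
qed

lemma udist_eq_1_iff:
  "udist U V = 1 \<longleftrightarrow> (\<exists>\<alpha>. norm \<alpha> = 1 \<and> cinner (U *v \<alpha>) (V *v \<alpha>) = 0)"
proof -
  have "udist U V = 1 \<longleftrightarrow> min_overlap U V = 0"
    unfolding udist_eq_min_overlap using min_overlap_nonneg[of U V] by simp
  also have "\<dots> \<longleftrightarrow> (\<exists>\<alpha>. norm \<alpha> = 1 \<and> overlap U V \<alpha> = 0)"
  proof
    assume "min_overlap U V = 0"
    then show "\<exists>\<alpha>. norm \<alpha> = 1 \<and> overlap U V \<alpha> = 0"
      using min_overlap_attained[of U V] by simp
  next
    assume "\<exists>\<alpha>. norm \<alpha> = 1 \<and> overlap U V \<alpha> = 0"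
    then obtain \<alpha> where "norm \<alpha> = 1" and "overlap U V \<alpha> = 0" by blast
    then show "min_overlap U V = 0"
      using min_overlap_le[of \<alpha> U V] min_overlap_nonneg[of U V] by simp
  qed
  finally show ?thesis by (simp add: overlap_def)
qed

lemma eigenvector_if_overlap_eq_1:
  assumes U: "unitary U" and V: "unitary V"
    and overlap: "\<And>\<psi>. norm \<psi> = 1 \<Longrightarrow> overlap U V \<psi> = 1"
  shows "\<exists>c. (cadj U ** V) *v \<psi> = c *s \<psi>"
proof -
  let ?M = "cadj U ** V"
  have unit: "?M *v \<phi> = cinner \<phi> (?M *v \<phi>) *s \<phi>" if \<phi>: "norm \<phi> = 1" for \<phi>
  proof (rule eq_cinner_smult_if_cmod_cinner_eq_norm[OF \<phi>])
    have "norm (?M *v \<phi>) = 1"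
      using \<phi> unitary_norm[OF unitary_cadj[OF U]] unitary_norm[OF V]
      by (simp add: matrix_vector_mul_assoc[symmetric])
    moreover have "(cmod (cinner \<phi> (?M *v \<phi>)))\<^sup>2 = 1"
      using overlap[OF \<phi>]
      by (simp add: overlap_def matrix_vector_mul_assoc[symmetric] cinner_adjoint)
    ultimately show "cmod (cinner \<phi> (?M *v \<phi>)) = norm (?M *v \<phi>)"
      using norm_ge_zero[of "cinner \<phi> (?M *v \<phi>)"] by (auto simp: power2_eq_1_iff)
  qed
  show ?thesis
  proof (cases "\<psi> = 0")
    case True
    then show ?thesis by (auto simp: vec_eq_iff matrix_vector_mult_def)
  next
    case False
    define r where "r = complex_of_real (norm \<psi>)"
    define \<phi> where "\<phi> = inverse r *s \<psi>"
    have "r \<noteq> 0" using False r_def by simp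
    then have \<psi>: "\<psi> = r *s \<phi>" unfolding \<phi>_def by (simp add: vector_smult_assoc)
    have "norm \<phi> = 1"
      using False unfolding \<phi>_def r_def norm_smult_complex by (simp add: norm_inverse)
    have "?M *v \<psi> = r *s (?M *v \<phi>)" by (simp add: \<psi> matrix_vector_mult_smult)
    also have "\<dots> = r *s (cinner \<phi> (?M *v \<phi>) *s \<phi>)"
      using unit[OF \<open>norm \<phi> = 1\<close>] by (rule arg_cong)
    also have "\<dots> = cinner \<phi> (?M *v \<phi>) *s \<psi>"
      by (simp add: \<psi> vector_smult_assoc mult.commute)
    finally show ?thesis by blast
  qed
qed

lemma cscale_eq_if_adjoint_mult_scalar:
  fixes U V :: "complex^'n^'n"
  assumes U: "unitary U" and V: "unitary V" and a: "\<And>\<psi>. (cadj U ** V) *v \<psi> = a *s \<psi>"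
  shows "cmod a = 1 \<and> U = cscale (cnj a) V"
proof -
  have "V *v \<psi> = cscale a U *v \<psi>" for \<psi>
  proof -
    have "V *v \<psi> = U *v ((cadj U ** V) *v \<psi>)"
      using U unfolding unitary_def by (simp add: matrix_vector_mul_assoc matrix_mul_assoc)
    then show ?thesis by (simp add: a matrix_vector_mult_smult cscale_matrix_vector_mult)
  qed
  then have VU: "V = cscale a U" by (simp add: matrix_eq)
  obtain \<psi> :: "complex^'n" where \<psi>: "norm \<psi> = 1" using unit_sphere_nonempty by blast
  have "1 = norm (V *v \<psi>)" using unitary_norm[OF V] \<psi> by simp
  also have "\<dots> = cmod a * norm (U *v \<psi>)"
    by (simp add: VU cscale_matrix_vector_mult norm_smult_complex)
  also have "\<dots> = cmod a" using unitary_norm[OF U] \<psi> by simp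
  finally have a1: "cmod a = 1" ..
  then have "cnj a * a = 1" using complex_norm_square[of a] by (simp add: mult.commute)
  then have "U = cscale (cnj a) V"
    unfolding VU cscale_def by (simp add: vec_eq_iff mult.assoc[symmetric])
  with a1 show ?thesis by simp
qed

lemma udist_eq_0_iff:
  assumes U: "unitary U" and V: "unitary V"
  shows "udist U V = 0 \<longleftrightarrow> (\<exists>c. cmod c = 1 \<and> U = cscale c V)"
proof
  assume "udist U V = 0"
  then have "min_overlap U V = 1"
    unfolding udist_eq_min_overlap using min_overlap_le_1[OF U V] by simp
  then have "overlap U V \<psi> = 1" if "norm \<psi> = 1" for \<psi>
    using min_overlap_le[OF that, of U V] overlap_le_1[OF U V that] by simp
  then obtain a where "\<And>\<psi>. (cadj U ** V) *v \<psi> = a *s \<psi>"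
    using scalar_if_all_eigenvectors eigenvector_if_overlap_eq_1[OF U V] by metis
  then show "\<exists>c. cmod c = 1 \<and> U = cscale c V"
    using cscale_eq_if_adjoint_mult_scalar[OF U V] by (metis complex_mod_cnj)
next
  assume "\<exists>c. cmod c = 1 \<and> U = cscale c V"
  then obtain c where c: "cmod c = 1" "U = cscale c V" by blast
  have "udist U V = udist V V" using udist_cscale_left[OF c(1)] c(2) by simp
  also have "\<dots> \<le> 0"
    using V by (intro udist_le) (simp_all add: line_dist_def cinner_self_eq_norm_sq unitary_norm)
  finally show "udist U V = 0" using udist_nonneg[OF U V] by simp
qed

theorem theorem3:
  fixes U V W :: "complex ^ 'n ^ 'n"
  assumes "unitary U" and "unitary V" and "unitary W"
  shows "(\<forall>c. cmod c = 1 \<longrightarrow> udist U (cscale c V) = udist U V \<and> udist (cscale c U) V = udist U V)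
    \<and> (0 \<le> udist U V \<and> udist U V \<le> 1
       \<and> (udist U V = 0 \<longleftrightarrow> (\<exists>c. cmod c = 1 \<and> U = cscale c V)))
    \<and> udist U V = udist V U
    \<and> udist U W \<le> udist U V + udist V W
    \<and> (\<forall>X. unitary X \<longrightarrow> udist (X ** U) (X ** V) = udist U V \<and> udist (U ** X) (V ** X) = udist U V)
    \<and> (udist U V = 1 \<longleftrightarrow> (\<exists>\<alpha>. norm \<alpha> = 1 \<and> cinner (U *v \<alpha>) (V *v \<alpha>) = 0))"
  using assms
  by (simp add: udist_cscale_right udist_cscale_left udist_nonneg udist_le_1 udist_eq_0_iff
      udist_commute udist_triangle udist_mult_left udist_mult_right udist_eq_1_iff)

end
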